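(* Let $d\in\mathbb{N}$, let $\mathcal{L}:\mathbb{R}^d\to\mathbb{R}$ be differentiable and $L$-smooth (i.e. $\nabla\mathcal{L}$ is $L$-Lipschitz with respect to the Euclidean norm, for some $L\ge 0$), and let $\tau>0$. Let $(\lambda^{(k)})_{k\ge 0}$ be any sequence of parameters with $\lambda^{(k)}\ge 0$. Starting from arbitrary $p^{(0)},\theta^{(0)}\in\mathbb{R}^d$, define for $k\ge 0$ $$p^{(k+1)} = p^{(k)} - \tau\,\nabla\mathcal{L}(\theta^{(k)}),\qquad \theta^{(k+1)} = \nabla \operatorname{EN}_{\lambda^{(k)}}^*\big(p^{(k+1)}\big),$$ where $\operatorname{EN}_\lambda(\theta)=\tfrac12|\theta|_2^2+\lambda|\theta|_1$ and $\nabla\operatorname{EN}_\lambda^*(p) = \big(\operatorname{sign}(p_i)\max\{|p_i|-\lambda,0\}\big)_{i=1}^d$ is the gradient of its convex conjugate (componentwise soft-thresholding). Then for every $k\ge 1$, $$\mathcal{L}(\theta^{(k+1)}) + \Big(\frac{1}{\tau}-\frac{L}{2}\Big)\,|\theta^{(k+1)}-\theta^{(k)}|_2^2 + \frac{\lambda^{(k)}-\lambda^{(k-1)}}{\tau}\big(|\theta^{(k+1)}|_1 - |\theta^{(k)}|_1\big) \le \mathcal{L}(\theta^{(k)}).$$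
   Context: $|\cdot|_1$ and $|\cdot|_2$ denote the $\ell_1$ and Euclidean norms on $\mathbb{R}^d$. The iteration is a linearized Bregman / lazy mirror descent scheme with an elastic-net mirror functional whose $\ell_1$-weight $\lambda^{(k)}$ may change from iteration to iteration. *)

theory Defs
  imports "HOL-Analysis.Analysis"
begin

definition l1norm :: "real^'n \<Rightarrow> real" where
  "l1norm x = (\<Sum>i\<in>UNIV. \<bar>x $ i\<bar>)"

text \<open>Gradient of the convex conjugate of the elastic net EN_lam(theta) = 1/2 |theta|_2^2 + lam |theta|_1:
  componentwise soft-thresholding.\<close>
definition grad_EN_conj :: "real \<Rightarrow> real^'n \<Rightarrow> real^'n" where
  "grad_EN_conj lam p = (\<chi> i. sgn (p $ i) * max (\<bar>p $ i\<bar> - lam) 0)"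

end

theory Submission
  imports Defs
begin

text \<open>Soft-thresholding is the proximal map of \<open>\<lambda> |.|\<^sub>1\<close>, so \<open>p(k+1) - \<theta>(k+1)\<close> is
  \<open>\<lambda>(k)\<close> times a subgradient of \<open>|.|\<^sub>1\<close> at \<open>\<theta>(k+1)\<close>. Comparing this optimality
  condition at two consecutive steps gives a strong monotonicity estimate for soft-thresholding
  with varying thresholds:
  \<open>\<langle>p(k+1) - p(k), \<theta>(k+1) - \<theta>(k)\<rangle> \<ge> |\<theta>(k+1) - \<theta>(k)|\<^sub>2\<^sup>2 + (\<lambda>(k) - \<lambda>(k-1)) (|\<theta>(k+1)|\<^sub>1 - |\<theta>(k)|\<^sub>1)\<close>.
  Since \<open>p(k+1) - p(k) = -\<tau> gradL(\<theta>(k))\<close>, inserting this into the descent lemma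
  \<open>Loss y \<le> Loss x + \<langle>gradL x, y - x\<rangle> + Lc/2 |y - x|\<^sub>2\<^sup>2\<close> for \<open>Lc\<close>-smooth functions gives the claim.\<close>

definition soft_threshold :: "real \<Rightarrow> real \<Rightarrow> real" where
  "soft_threshold l a = sgn a * max (\<bar>a\<bar> - l) 0"

lemma grad_EN_conj_nth: "grad_EN_conj l p $ i = soft_threshold l (p $ i)"
  by (simp add: grad_EN_conj_def soft_threshold_def)

lemma soft_threshold_residual:
  fixes l a :: real
  assumes "l \<ge> 0"
  obtains s where "\<bar>s\<bar> \<le> 1" "s * soft_threshold l a = \<bar>soft_threshold l a\<bar>"
    "a = soft_threshold l a + l * s"
proof (cases "\<bar>a\<bar> > l")
  case True
  then show ?thesis
    by (intro that[of "sgn a"]) (auto simp: soft_threshold_def sgn_if abs_mult algebra_simps)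
next
  case False
  show ?thesis
  proof (cases "l = 0")
    case True
    with False show ?thesis by (intro that[of 0]) (auto simp: soft_threshold_def)
  next
    case False
    with assms \<open>\<not> \<bar>a\<bar> > l\<close> show ?thesis
      by (intro that[of "a / l"]) (auto simp: soft_threshold_def field_simps)
  qed
qed

lemma mult_le_abs_if_abs_le_one:
  fixes s y :: real
  assumes "\<bar>s\<bar> \<le> 1"
  shows "s * y \<le> \<bar>y\<bar>"
proof -
  have "s * y \<le> \<bar>s\<bar> * \<bar>y\<bar>" by (metis abs_ge_self abs_mult)
  also have "\<dots> \<le> \<bar>y\<bar>" using assms by (simp add: mult_left_le_one_le)
  finally show ?thesis .
qed

lemma soft_threshold_monotone:
  fixes l l' a b :: real
  assumes "l \<ge> 0" "l' \<ge> 0"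
  defines "x \<equiv> soft_threshold l' a" and "y \<equiv> soft_threshold l b"
  shows "(y - x)\<^sup>2 + (l - l') * (\<bar>y\<bar> - \<bar>x\<bar>) \<le> (b - a) * (y - x)"
proof -
  obtain s where s: "\<bar>s\<bar> \<le> 1" "s * x = \<bar>x\<bar>" "a = x + l' * s"
    using soft_threshold_residual[OF assms(2)] unfolding x_def by metis
  obtain t where t: "\<bar>t\<bar> \<le> 1" "t * y = \<bar>y\<bar>" "b = y + l * t"
    using soft_threshold_residual[OF assms(1)] unfolding y_def by metis
  have "l' * (s * y) \<le> l' * \<bar>y\<bar>" "l * (t * x) \<le> l * \<bar>x\<bar>"
    using assms s(1) t(1) by (simp_all add: mult_left_mono mult_le_abs_if_abs_le_one)
  moreover have "(b - a) * (y - x) = (y - x)\<^sup>2 + l * (t * y) - l * (t * x) - l' * (s * y) + l' * (s * x)"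
    by (simp add: s(3) t(3) algebra_simps power2_eq_square)
  ultimately show ?thesis
    using s(2) t(2) by (simp add: algebra_simps)
qed

lemma grad_EN_conj_monotone:
  fixes a b :: "real^'n" and l l' :: real
  assumes "l \<ge> 0" "l' \<ge> 0"
  defines "x \<equiv> grad_EN_conj l' a" and "y \<equiv> grad_EN_conj l b"
  shows "(norm (y - x))\<^sup>2 + (l - l') * (l1norm y - l1norm x) \<le> inner (b - a) (y - x)"
proof -
  have "(norm (y - x))\<^sup>2 = (\<Sum>i\<in>UNIV. (y$i - x$i)\<^sup>2)"
    unfolding power2_norm_eq_inner by (simp add: inner_vec_def power2_eq_square)
  then have "(norm (y - x))\<^sup>2 + (l - l') * (l1norm y - l1norm x)
      = (\<Sum>i\<in>UNIV. (y$i - x$i)\<^sup>2 + (l - l') * (\<bar>y$i\<bar> - \<bar>x$i\<bar>))"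
    by (simp add: l1norm_def sum.distrib sum_distrib_left sum_subtractf right_diff_distrib)
  also have "\<dots> \<le> (\<Sum>i\<in>UNIV. (b$i - a$i) * (y$i - x$i))"
    by (rule sum_mono) (simp add: x_def y_def grad_EN_conj_nth soft_threshold_monotone[OF assms(1,2)])
  also have "\<dots> = inner (b - a) (y - x)"
    by (simp add: inner_vec_def)
  finally show ?thesis .
qed

lemma GDERIV_along_line:
  assumes "GDERIV f (x + t *\<^sub>R d) :> D"
  shows "((\<lambda>t. f (x + t *\<^sub>R d)) has_real_derivative inner D d) (at t)"
proof -
  have "((\<lambda>t. x + t *\<^sub>R d) has_derivative (\<lambda>h. h *\<^sub>R d)) (at t)"
    by (auto intro!: derivative_eq_intros)
  from has_derivative_compose[OF this assms[unfolded gderiv_def]]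
  show ?thesis
    by (simp add: has_field_derivative_def o_def inner_commute mult.commute[of _ "inner D d"])
qed

lemma lipschitz_gradient_descent:
  fixes f :: "'a::real_inner \<Rightarrow> real"
  assumes grad: "\<And>x. GDERIV f x :> g x"
    and lipschitz: "\<And>x y. norm (g x - g y) \<le> Lc * norm (x - y)"
  shows "f y \<le> f x + inner (g x) (y - x) + Lc / 2 * (norm (y - x))\<^sup>2"
proof -
  define d where "d = y - x"
  define \<psi> where "\<psi> t = f (x + t *\<^sub>R d) - t * inner (g x) d - Lc / 2 * t\<^sup>2 * (norm d)\<^sup>2" for t
  have \<psi>_deriv: "(\<psi> has_real_derivative
      inner (g (x + t *\<^sub>R d) - g x) d - Lc * t * (norm d)\<^sup>2) (at t)" for t
  proof -
    have "((\<lambda>t. f (x + t *\<^sub>R d)) has_real_derivative inner (g (x + t *\<^sub>R d)) d) (at t)"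
      by (rule GDERIV_along_line[OF grad])
    then show ?thesis
      unfolding \<psi>_def by (auto intro!: derivative_eq_intros simp: inner_diff_left power2_eq_square)
  qed
  have \<psi>_deriv_nonpos: "inner (g (x + t *\<^sub>R d) - g x) d - Lc * t * (norm d)\<^sup>2 \<le> 0"
    if "0 \<le> t" for t
  proof -
    have "inner (g (x + t *\<^sub>R d) - g x) d \<le> norm (g (x + t *\<^sub>R d) - g x) * norm d"
      by (rule norm_cauchy_schwarz)
    also have "\<dots> \<le> Lc * norm (t *\<^sub>R d) * norm d"
      using lipschitz[of "x + t *\<^sub>R d" x] by (simp add: mult_right_mono)
    also have "\<dots> = Lc * t * (norm d)\<^sup>2"
      using that by (simp add: power2_eq_square)
    finally show ?thesis by simp
  qed
  have "\<psi> 1 \<le> \<psi> 0"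
  proof (rule DERIV_nonpos_imp_nonincreasing[of 0 1])
    fix t :: real
    assume "0 \<le> t" "t \<le> 1"
    then show "\<exists>D. (\<psi> has_real_derivative D) (at t) \<and> D \<le> 0"
      using \<psi>_deriv \<psi>_deriv_nonpos by blast
  qed simp
  then show ?thesis
    by (simp add: \<psi>_def d_def algebra_simps)
qed

theorem lemma1:
  fixes Loss :: "real^'n \<Rightarrow> real" and gradL :: "real^'n \<Rightarrow> real^'n"
    and Lc \<tau> :: real and lam :: "nat \<Rightarrow> real"
    and p \<theta> :: "nat \<Rightarrow> real^'n" and k :: nat
  assumes grad: "\<And>x. GDERIV Loss x :> gradL x"
    and Lc_nonneg: "Lc \<ge> 0"
    and smooth: "\<And>x y. norm (gradL x - gradL y) \<le> Lc * norm (x - y)"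
    and tau_pos: "\<tau> > 0"
    and lam_nonneg: "\<And>j. lam j \<ge> 0"
    and p_step: "\<And>j. p (Suc j) = p j - \<tau> *\<^sub>R gradL (\<theta> j)"
    and theta_step: "\<And>j. \<theta> (Suc j) = grad_EN_conj (lam j) (p (Suc j))"
    and k_ge: "k \<ge> 1"
  shows "Loss (\<theta> (Suc k)) + (1 / \<tau> - Lc / 2) * (norm (\<theta> (Suc k) - \<theta> k))\<^sup>2
           + (lam k - lam (k - 1)) / \<tau> * (l1norm (\<theta> (Suc k)) - l1norm (\<theta> k))
         \<le> Loss (\<theta> k)"
proof -
  define D where "D = (norm (\<theta> (Suc k) - \<theta> k))\<^sup>2"
  define E where "E = (lam k - lam (k - 1)) * (l1norm (\<theta> (Suc k)) - l1norm (\<theta> k))"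
  define G where "G = inner (gradL (\<theta> k)) (\<theta> (Suc k) - \<theta> k)"
  have theta_k: "\<theta> k = grad_EN_conj (lam (k - 1)) (p k)"
    using theta_step[of "k - 1"] k_ge by simp
  have "D + E \<le> inner (p (Suc k) - p k) (\<theta> (Suc k) - \<theta> k)"
    unfolding D_def E_def theta_step[of k] theta_k
    by (rule grad_EN_conj_monotone[OF lam_nonneg lam_nonneg])
  also have "\<dots> = - \<tau> * G"
    by (simp add: p_step G_def)
  finally have "G \<le> - (D + E) / \<tau>"
    using tau_pos by (simp add: field_simps)
  moreover have "Loss (\<theta> (Suc k)) \<le> Loss (\<theta> k) + G + Lc / 2 * D"
    unfolding D_def G_def by (rule lipschitz_gradient_descent[OF grad smooth])
  moreover have "(1 / \<tau> - Lc / 2) * D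
      + (lam k - lam (k - 1)) / \<tau> * (l1norm (\<theta> (Suc k)) - l1norm (\<theta> k))
      = (D + E) / \<tau> - Lc / 2 * D"
    using tau_pos by (simp add: E_def field_simps)
  ultimately show ?thesis
    unfolding D_def[symmetric] by linarith
qed

end
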